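(* Let $\mathcal Q=(-1,1)\times(-1,1)\subset\mathbb R^2$ be the standard open square. Then for every $R>0$, $\mu_{\mathcal Q}\big(\mathcal B_{\mathcal Q}(0,R)\big)\le 2\pi R^2$.
   Context: Let $\mathcal C\subset\mathbb R^m$ be a nonempty open bounded convex set. For distinct $p,q\in\mathcal C$, let $a,b$ be the intersection points of the straight line through $p,q$ with $\partial\mathcal C$, labelled so that $p=(1-s)a+sb$ and $q=(1-t)a+tb$ with $0<s<t<1$; the Hilbert metric is $d_{\mathcal C}(p,q)=\frac12\ln\!\big(\frac{1-s}{s}\cdot\frac{t}{1-t}\big)$, and $d_{\mathcal C}(p,p)=0$. The associated Finsler norm at $p\in\mathcal C$ is $F_{\mathcal C}(p,v)=\frac12\big(\frac1{t^-}+\frac1{t^+}\big)$ for $v\neq0$, where $t^\pm>0$ are the unique numbers with $p-t^-v\in\partial\mathcal C$ and $p+t^+v\in\partial\mathcal C$, and $F_{\mathcal C}(p,0)=0$. Let $B_{\mathcal C}(p)=\{v\in\mathbb R^m : F_{\mathcal C}(p,v)<1\}$, let $\mathrm{vol}$ be Lebesgue measure on $\mathbb R^m$ and $\omega_m$ the Lebesgue volume of the Euclidean unit ball (so $\omega_2=\pi$). The Hilbert measure is $\mu_{\mathcal C}(A)=\int_A\frac{\omega_m}{\mathrm{vol}(B_{\mathcal C}(p))}\,d\mathrm{vol}(p)$ for Borel $A\subset\mathcal C$. When $0\in\mathcal C$ and $R>0$, $\mathcal B_{\mathcal C}(0,R)=\{p\in\mathcal C : d_{\mathcal C}(0,p)<R\}$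 denotes the open metric ball. These definitions are applied with $\mathcal C=\mathcal Q$, $m=2$. *)

theory Defs
  imports "HOL-Analysis.Analysis"
begin

definition hilbert_dist :: "'a::euclidean_space set \<Rightarrow> 'a \<Rightarrow> 'a \<Rightarrow> real" where
  "hilbert_dist C p q =
     (if p = q then 0 else
      (THE d. \<exists>a b s t. a \<in> frontier C \<and> b \<in> frontier C \<and> 0 < s \<and> s < t \<and> t < 1 \<and>
         p = (1 - s) *\<^sub>R a + s *\<^sub>R b \<and> q = (1 - t) *\<^sub>R a + t *\<^sub>R b \<and>
         d = (1/2) * ln (((1 - s) / s) * (t / (1 - t)))))"

definition exit_time :: "'a::euclidean_space set \<Rightarrow> 'a \<Rightarrow> 'a \<Rightarrow> real" where
  "exit_time C p v = (THE t. t > 0 \<and> p + t *\<^sub>R v \<in> frontier C)"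

definition hilbert_finsler :: "'a::euclidean_space set \<Rightarrow> 'a \<Rightarrow> 'a \<Rightarrow> real" where
  "hilbert_finsler C p v =
     (if v = 0 then 0
      else (1/2) * (1 / exit_time C p (- v) + 1 / exit_time C p v))"

definition finsler_ball :: "'a::euclidean_space set \<Rightarrow> 'a \<Rightarrow> 'a set" where
  "finsler_ball C p = {v. hilbert_finsler C p v < 1}"

definition hilbert_measure :: "'a::euclidean_space set \<Rightarrow> 'a set \<Rightarrow> ennreal" where
  "hilbert_measure C A =
     (\<integral>\<^sup>+ p \<in> A. ennreal (measure lebesgue (ball (0::'a) 1) / measure lebesgue (finsler_ball C p))
        \<partial>lebesgue)"

definition hilbert_ball :: "'a::euclidean_space set \<Rightarrow> 'a \<Rightarrow> real \<Rightarrow> 'a set" where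
  "hilbert_ball C c R = {p \<in> C. hilbert_dist C c p < R}"

definition square_Q :: "(real \<times> real) set" where
  "square_Q = box (-1, -1) (1, 1)"

end

theory Submission
  imports Defs
begin

(*
  A ray from p = (x,y) in direction v leaves Q through one
      of its sides; the reciprocal exit time is the rate at which one coordinate reaches
      +-1, hence at most the sum of the two coordinate rates.  Averaging over v and -v
      bounds the Hilbert-Finsler norm by the weighted l1-norm
      |v1|/(1-x^2) + |v2|/(1-y^2).  The Finsler unit ball therefore contains a rhombus of
      area 2(1-x^2)(1-y^2), so the density of the Hilbert measure at p is at most
      (pi/2) / ((1-x^2)(1-y^2)).
  (2) Metric geometry of Q.  The chord through 0 and p meets the boundary at -p/rho and
      p/rho with rho the sup-norm of p, which gives d(0,p) = artanh rho; hence the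
      Hilbert ball of radius R lies in the cube [-tanh R, tanh R]^2.
  (3) Integration.  The density bound is a product of one-variable weights, so Fubini
      reduces the measure of the ball to (pi/2) times the square of the integral of
      1/(1-x^2) over [-tanh R, tanh R], which is 2R.
*)

section \<open>The square and its boundary\<close>

lemma square_Q_iff: "z \<in> square_Q \<longleftrightarrow> \<bar>fst z\<bar> < 1 \<and> \<bar>snd z\<bar> < 1"
  by (cases z) (auto simp: square_Q_def mem_box Basis_prod_def abs_less_iff)

lemma frontier_square_Q_iff: "z \<in> frontier square_Q \<longleftrightarrow> max \<bar>fst z\<bar> \<bar>snd z\<bar> = 1"
proof -
  have "box (-1, -1) (1, 1) \<noteq> ({}::(real \<times> real) set)"
    using square_Q_iff[of 0] by (auto simp: square_Q_def)
  then show ?thesis unfolding square_Q_def frontier_box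
    by (cases z) (auto simp: mem_box Basis_prod_def abs_less_iff abs_le_iff max_def split: if_splits)
qed

lemma sup_norm_scaleR:
  "max \<bar>fst (c *\<^sub>R z)\<bar> \<bar>snd (c *\<^sub>R z)\<bar> = \<bar>c\<bar> * max \<bar>fst z\<bar> \<bar>snd z\<bar>"
  by (simp add: abs_mult max_mult_distrib_left)

text \<open>A proper convex combination of a point of (-1,1) and a point of [-1,1] lies in (-1,1);
  this is what makes exit times unique.\<close>
lemma convex_comb_abs_less:
  fixes a b l :: real
  assumes "0 \<le> l" "l < 1" "\<bar>a\<bar> < 1" "\<bar>b\<bar> \<le> 1"
  shows "\<bar>(1 - l) * a + l * b\<bar> < 1"
proof -
  have "\<bar>(1 - l) * a + l * b\<bar> \<le> (1 - l) * \<bar>a\<bar> + l * \<bar>b\<bar>"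
    using abs_triangle_ineq[of "(1 - l) * a" "l * b"] assms by (simp add: abs_mult)
  also have "\<dots> < 1"
  proof -
    have "(1 - l) * \<bar>a\<bar> < (1 - l) * 1" using assms by (intro mult_strict_left_mono) auto
    moreover have "l * \<bar>b\<bar> \<le> l * 1" using assms by (intro mult_left_mono) auto
    ultimately show ?thesis by simp
  qed
  finally show ?thesis .
qed

section \<open>Exit times and the Finsler norm\<close>

text \<open>Every ray from an interior point leaves Q exactly once, so the exit time in the
  definition of the Finsler norm is well defined.\<close>
lemma square_exit_unique:
  fixes p v :: "real \<times> real"
  assumes p: "p \<in> square_Q" and v: "v \<noteq> 0"
  shows "\<exists>!t. t > 0 \<and> p + t *\<^sub>R v \<in> frontier square_Q"
proof -
  obtain x y v1 v2 where pv: "p = (x, y)" "v = (v1, v2)" by (cases p, cases v)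
  have x: "\<bar>x\<bar> < 1" and y: "\<bar>y\<bar> < 1" using p by (auto simp: square_Q_iff pv)
  have vn: "\<bar>v1\<bar> + \<bar>v2\<bar> > 0" using v pv by (cases "v1 = 0") (auto simp: zero_prod_def)
  define f where "f t = max \<bar>x + t * v1\<bar> \<bar>y + t * v2\<bar>" for t
  have on_frontier: "p + t *\<^sub>R v \<in> frontier square_Q \<longleftrightarrow> f t = 1" for t
    by (simp add: frontier_square_Q_iff pv f_def)
  txt \<open>Existence: by the intermediate value theorem, since f 0 < 1 and f T \<ge> 1 for large T.\<close>
  define T where "T = 4 / (\<bar>v1\<bar> + \<bar>v2\<bar>)"
  have T: "T > 0" using vn by (simp add: T_def)
  have "T * \<bar>v1\<bar> + T * \<bar>v2\<bar> = T * (\<bar>v1\<bar> + \<bar>v2\<bar>)" by (simp only: distrib_left)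
  also have "\<dots> = 4" using vn unfolding T_def by (metis divide_eq_eq less_irrefl)
  finally have T_sum: "T * \<bar>v1\<bar> + T * \<bar>v2\<bar> = 4" .
  have "\<bar>x + T * v1\<bar> \<ge> T * \<bar>v1\<bar> - 1" "\<bar>y + T * v2\<bar> \<ge> T * \<bar>v2\<bar> - 1"
    using x y T by (auto simp: abs_mult abs_le_iff abs_less_iff)
  then have "f T \<ge> 1" using T_sum unfolding f_def by linarith
  moreover have "f 0 < 1" using x y by (simp add: f_def)
  moreover have "continuous_on {0..T} f" unfolding f_def by (intro continuous_intros)
  ultimately obtain t where t: "0 \<le> t" "t \<le> T" "f t = 1"
    using IVT'[of f 0 1 T] T by auto
  with \<open>f 0 < 1\<close> have exists: "t > 0 \<and> f t = 1" by (cases "t = 0") auto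
  txt \<open>Uniqueness: an earlier boundary point would be a proper convex combination of p and
    a later one, hence interior.\<close>
  have earlier_interior: "f s1 < 1" if "0 < s1" "s1 < s2" "f s2 = 1" for s1 s2
  proof -
    define l where "l = s1 / s2"
    have l: "0 \<le> l" "l < 1" using that by (auto simp: l_def)
    have "x + s1 * v1 = (1 - l) * x + l * (x + s2 * v1)"
      and "y + s1 * v2 = (1 - l) * y + l * (y + s2 * v2)"
      using that by (auto simp: l_def field_simps)
    moreover have "\<bar>x + s2 * v1\<bar> \<le> 1" "\<bar>y + s2 * v2\<bar> \<le> 1"
      using that(3) by (auto simp: f_def max_def split: if_splits)
    ultimately show ?thesis
      using convex_comb_abs_less[OF l x] convex_comb_abs_less[OF l y] by (simp add: f_def)
  qed
  have "t1 = t2" if "t1 > 0" "f t1 = 1" "t2 > 0" "f t2 = 1" for t1 t2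
    using earlier_interior[of t1 t2] earlier_interior[of t2 t1] that
    by (cases t1 t2 rule: linorder_cases) auto
  with exists show ?thesis unfolding on_frontier by blast
qed

text \<open>The rate at which a coordinate x \<in> (-1,1) moving with velocity w reaches \<plusminus>1.\<close>
definition exit_rate :: "real \<Rightarrow> real \<Rightarrow> real" where
  "exit_rate x w = (if w \<ge> 0 then w / (1 - x) else - w / (1 + x))"

lemma exit_rate_nonneg: "\<bar>x\<bar> < 1 \<Longrightarrow> exit_rate x w \<ge> 0"
  unfolding exit_rate_def by (auto intro: divide_nonneg_pos divide_nonpos_pos simp: abs_less_iff)

lemma exit_rate_symmetric_sum:
  assumes "\<bar>x\<bar> < 1"
  shows "exit_rate x w + exit_rate x (- w) = 2 * (\<bar>w\<bar> / (1 - x\<^sup>2))"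
proof -
  have "1 - x > 0" "1 + x > 0" using assms by (auto simp: abs_less_iff)
  moreover have "1 - x\<^sup>2 = (1 - x) * (1 + x)" by (simp add: power2_eq_square algebra_simps)
  ultimately show ?thesis unfolding exit_rate_def by (cases "w = 0") (auto simp: field_simps)
qed

lemma inverse_hitting_time_eq_exit_rate:
  fixes z w t :: real
  assumes z: "\<bar>z\<bar> < 1" and t: "t > 0" and hit: "\<bar>z + t * w\<bar> = 1"
  shows "1 / t = exit_rate z w"
proof -
  have a: "1 - z > 0" "1 + z > 0" using z by (auto simp: abs_less_iff)
  consider "z + t * w = 1" | "z + t * w = -1" using hit by (auto simp: abs_if split: if_splits)
  then show ?thesis
  proof cases
    case 1
    then have w: "w = (1 - z) / t" using t by (auto simp: field_simps)
    have "w > 0" unfolding w using a t by simp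
    then have "exit_rate z w = w / (1 - z)" by (simp add: exit_rate_def)
    also have "\<dots> = 1 / t" using w a t by (simp add: field_simps)
    finally show ?thesis by simp
  next
    case 2
    then have w: "w = - (1 + z) / t" using t by (auto simp: field_simps)
    have "w < 0" unfolding w using a t by (simp add: divide_neg_pos)
    then have "exit_rate z w = - w / (1 + z)" by (simp add: exit_rate_def)
    also have "\<dots> = 1 / t" using w a t by (simp add: field_simps)
    finally show ?thesis by simp
  qed
qed

text \<open>The ray leaves Q through a side, so the inverse exit time is one of the two
  coordinate exit rates.\<close>
lemma inverse_exit_time_le:
  fixes x y v1 v2 :: real
  assumes p: "(x, y) \<in> square_Q" and v: "(v1, v2) \<noteq> 0"
  shows "1 / exit_time square_Q (x, y) (v1, v2) \<le> exit_rate x v1 + exit_rate y v2"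
proof -
  define t where "t = exit_time square_Q (x, y) (v1, v2)"
  have "t > 0 \<and> (x, y) + t *\<^sub>R (v1, v2) \<in> frontier square_Q"
    unfolding t_def exit_time_def by (rule theI'[OF square_exit_unique[OF p v]])
  then have t: "t > 0" and side: "\<bar>x + t * v1\<bar> = 1 \<or> \<bar>y + t * v2\<bar> = 1"
    by (auto simp: frontier_square_Q_iff max_def split: if_splits)
  have x: "\<bar>x\<bar> < 1" and y: "\<bar>y\<bar> < 1" using p by (auto simp: square_Q_iff)
  from side have "1 / t = exit_rate x v1 \<or> 1 / t = exit_rate y v2"
    using inverse_hitting_time_eq_exit_rate[OF x t] inverse_hitting_time_eq_exit_rate[OF y t]
    by blast
  then show ?thesis unfolding t_def[symmetric]
    using exit_rate_nonneg[OF x, of v1] exit_rate_nonneg[OF y, of v2] by auto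
qed

lemma finsler_square_le:
  fixes x y v1 v2 :: real
  assumes p: "(x, y) \<in> square_Q"
  shows "hilbert_finsler square_Q (x, y) (v1, v2) \<le> \<bar>v1\<bar> / (1 - x\<^sup>2) + \<bar>v2\<bar> / (1 - y\<^sup>2)"
proof (cases "(v1, v2) = 0")
  case True
  then show ?thesis by (simp add: hilbert_finsler_def zero_prod_def)
next
  case False
  have x: "\<bar>x\<bar> < 1" and y: "\<bar>y\<bar> < 1" using p by (auto simp: square_Q_iff)
  have False': "(- v1, - v2) \<noteq> 0" using False by (simp add: zero_prod_def)
  have "hilbert_finsler square_Q (x, y) (v1, v2) =
        (1/2) * (1 / exit_time square_Q (x, y) (- v1, - v2) + 1 / exit_time square_Q (x, y) (v1, v2))"
    using False by (simp add: hilbert_finsler_def)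
  also have "\<dots> \<le> (1/2) * ((exit_rate x v1 + exit_rate x (- v1)) + (exit_rate y v2 + exit_rate y (- v2)))"
    using inverse_exit_time_le[OF p False] inverse_exit_time_le[OF p False'] by simp
  also have "\<dots> = \<bar>v1\<bar> / (1 - x\<^sup>2) + \<bar>v2\<bar> / (1 - y\<^sup>2)"
    unfolding exit_rate_symmetric_sum[OF x] exit_rate_symmetric_sum[OF y] by (simp add: mult.commute)
  finally show ?thesis .
qed

section \<open>Area of a rhombus and the density of the Hilbert measure\<close>

lemma tent_has_integral:
  fixes a b :: real
  assumes a: "a > 0"
  shows "((\<lambda>u. 2 * b * (1 - \<bar>u\<bar> / a)) has_integral (2 * a * b)) {-a..a}"
proof -
  define f where "f u = 2 * b * (1 - \<bar>u\<bar> / a)" for u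
  define F1 where "F1 u = 2 * b * (u + u\<^sup>2 / (2 * a))" for u
  define F2 where "F2 u = 2 * b * (u - u\<^sup>2 / (2 * a))" for u
  have "(F1 has_vector_derivative f u) (at u within {-a..0})" if "u \<in> {-a..0}" for u
  proof -
    have "(F1 has_real_derivative 2 * b * (1 + 2 * u / (2 * a))) (at u within {-a..0})"
      unfolding F1_def using a by (auto intro!: derivative_eq_intros)
    moreover have "2 * b * (1 + 2 * u / (2 * a)) = f u" using that a by (simp add: f_def)
    ultimately show ?thesis by (simp add: has_real_derivative_iff_has_vector_derivative)
  qed
  then have left: "(f has_integral (F1 0 - F1 (-a))) {-a..0}"
    using a by (intro fundamental_theorem_of_calculus) auto
  have "(F2 has_vector_derivative f u) (at u within {0..a})" if "u \<in> {0..a}" for u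
  proof -
    have "(F2 has_real_derivative 2 * b * (1 - 2 * u / (2 * a))) (at u within {0..a})"
      unfolding F2_def using a by (auto intro!: derivative_eq_intros)
    moreover have "2 * b * (1 - 2 * u / (2 * a)) = f u" using that a by (simp add: f_def)
    ultimately show ?thesis by (simp add: has_real_derivative_iff_has_vector_derivative)
  qed
  then have right: "(f has_integral (F2 a - F2 0)) {0..a}"
    using a by (intro fundamental_theorem_of_calculus) auto
  have "(f has_integral ((F1 0 - F1 (-a)) + (F2 a - F2 0))) {-a..a}"
    using a by (intro has_integral_combine[OF _ _ left right]) auto
  moreover have "(F1 0 - F1 (-a)) + (F2 a - F2 0) = 2 * a * b"
    using a by (simp add: F1_def F2_def power2_eq_square field_simps)
  ultimately show ?thesis by (simp add: f_def[abs_def])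
qed

definition rhombus :: "real \<Rightarrow> real \<Rightarrow> (real \<times> real) set" where
  "rhombus a b = {v. \<bar>fst v\<bar> / a + \<bar>snd v\<bar> / b < 1}"

lemma rhombus_sets:
  assumes "a > 0" "b > 0"
  shows "rhombus a b \<in> sets lborel"
proof -
  have "open (rhombus a b)"
    unfolding rhombus_def by (intro open_Collect_less continuous_intros) (use assms in auto)
  then show ?thesis unfolding sets_lborel by (rule borel_open)
qed

text \<open>Cavalieri: the vertical section of the rhombus above u has length given by the tent
  function, so its area is 2ab.\<close>
lemma rhombus_emeasure:
  fixes a b :: real
  assumes a: "a > 0" and b: "b > 0"
  shows "emeasure lborel (rhombus a b) = ennreal (2 * a * b)"
proof -
  define D where "D = rhombus a b"
  have D[measurable]: "D \<in> sets (lborel \<Otimes>\<^sub>M lborel)"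
    using rhombus_sets[OF a b] unfolding D_def lborel_prod .
  have vertical_section: "(\<integral>\<^sup>+ w. indicator D (u, w) \<partial>lborel)
      = ennreal (2 * b * (1 - \<bar>u\<bar> / a)) * indicator {-a..a} u" for u
  proof (cases "\<bar>u\<bar> < a")
    case True
    define c where "c = b * (1 - \<bar>u\<bar> / a)"
    have c: "c > 0" using True a b by (simp add: c_def field_simps)
    have "(u, w) \<in> D \<longleftrightarrow> w \<in> {-c<..<c}" for w
    proof -
      have "(u, w) \<in> D \<longleftrightarrow> \<bar>w\<bar> / b < 1 - \<bar>u\<bar> / a" by (auto simp: D_def rhombus_def)
      also have "\<dots> \<longleftrightarrow> \<bar>w\<bar> < c" using b by (simp add: c_def divide_less_eq mult.commute)
      also have "\<dots> \<longleftrightarrow> w \<in> {-c<..<c}" by (auto simp: abs_less_iff)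
      finally show ?thesis .
    qed
    then have "indicator D (u, w) = (indicator {-c<..<c} w :: ennreal)" for w
      unfolding indicator_def by presburger
    then have "(\<integral>\<^sup>+ w. indicator D (u, w) \<partial>lborel) = emeasure lborel {-c<..<c}" by simp
    also have "\<dots> = ennreal (2 * c)" using c by simp
    finally show ?thesis using True by (auto simp: c_def indicator_def abs_less_iff mult.assoc)
  next
    case False
    have "\<bar>u\<bar> / a \<ge> 1" using False a by simp
    moreover have "\<bar>w\<bar> / b \<ge> 0" for w using b by simp
    ultimately have outside: "indicator D (u, w) = (0 :: ennreal)" for w
      by (simp add: D_def rhombus_def indicator_def not_less add_increasing2)
    have "u \<notin> {-a..a} \<or> \<bar>u\<bar> = a" using False by auto
    then have "ennreal (2 * b * (1 - \<bar>u\<bar> / a)) * indicator {-a..a} u = 0"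
      using a by auto
    with outside show ?thesis by simp
  qed
  have "emeasure lborel D = (\<integral>\<^sup>+ z. indicator D z \<partial>lborel)"
    using rhombus_sets[OF a b] by (simp add: D_def)
  also have "\<dots> = (\<integral>\<^sup>+ z. indicator D z \<partial>(lborel \<Otimes>\<^sub>M lborel))"
    by (simp only: lborel_prod)
  also have "\<dots> = (\<integral>\<^sup>+ u. \<integral>\<^sup>+ w. indicator D (u, w) \<partial>lborel \<partial>lborel)"
    by (rule lborel.nn_integral_fst[symmetric]) measurable
  also have "\<dots> = (\<integral>\<^sup>+ u. ennreal (2 * b * (1 - \<bar>u\<bar> / a)) * indicator {-a..a} u \<partial>lborel)"
    unfolding vertical_section ..
  also have "\<dots> = ennreal (2 * a * b)"
    using a b tent_has_integral[OF a, of b]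
    by (intro nn_integral_has_integral_lebesgue') (auto simp: field_simps)
  finally show ?thesis unfolding D_def .
qed

text \<open>Density of the Hilbert measure of Q: the Finsler unit ball contains the rhombus with
  half-diagonals 1-x^2 and 1-y^2, whose area is 2(1-x^2)(1-y^2), and the Euclidean unit
  disc has area pi.\<close>
lemma hilbert_density_square_le:
  fixes x y :: real
  assumes p: "(x, y) \<in> square_Q"
  shows "measure lebesgue (ball (0::real \<times> real) 1) / measure lebesgue (finsler_ball square_Q (x, y))
         \<le> (pi / 2) * (1 / (1 - x\<^sup>2)) * (1 / (1 - y\<^sup>2))"
proof -
  define a where "a = 1 - x\<^sup>2"
  define b where "b = 1 - y\<^sup>2"
  define B where "B = finsler_ball square_Q (x, y)"
  have "\<bar>x\<bar> < 1" "\<bar>y\<bar> < 1" using p by (auto simp: square_Q_iff)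
  then have a: "a > 0" and b: "b > 0" by (simp_all add: a_def b_def abs_square_less_1)
  have disc: "measure lebesgue (ball (0::real \<times> real) 1) = pi"
    using content_ball[of 1 "0::real \<times> real"] by (simp add: eval_unit_ball_vol)
  have bound: "(pi / 2) * (1 / (1 - x\<^sup>2)) * (1 / (1 - y\<^sup>2)) = pi / (2 * a * b)"
    by (simp add: a_def b_def)
  show ?thesis
  proof (cases "measure lebesgue B = 0")
    case True
    then show ?thesis unfolding bound B_def[symmetric] using a b by simp
  next
    case False
    then have "B \<in> sets lebesgue" "emeasure lebesgue B \<noteq> \<infinity>"
      using measure_notin_sets by (auto simp: measure_def)
    then have B_fin: "B \<in> fmeasurable lebesgue" by (simp add: fmeasurable_def top.not_eq_extremum)
    have rhombus_B: "rhombus a b \<subseteq> B"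
    proof
      fix v :: "real \<times> real"
      assume v: "v \<in> rhombus a b"
      obtain v1 v2 where v12: "v = (v1, v2)" by (cases v)
      have "hilbert_finsler square_Q (x, y) (v1, v2) \<le> \<bar>v1\<bar> / a + \<bar>v2\<bar> / b"
        using finsler_square_le[OF p] by (simp add: a_def b_def)
      also have "\<dots> < 1" using v by (simp add: rhombus_def v12)
      finally show "v \<in> B" by (simp add: B_def finsler_ball_def v12)
    qed
    have rhombus_sets': "rhombus a b \<in> sets lebesgue" using rhombus_sets[OF a b] by simp
    have "2 * a * b = measure lebesgue (rhombus a b)"
      using rhombus_sets[OF a b] rhombus_emeasure[OF a b] a b by (simp add: measure_def)
    also have "\<dots> \<le> measure lebesgue B"
      using rhombus_B rhombus_sets' B_fin by (intro measure_mono_fmeasurable)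
    finally have area: "2 * a * b \<le> measure lebesgue B" .
    have "0 < 2 * a * b" using a b by simp
    with area have "pi / measure lebesgue B \<le> pi / (2 * a * b)"
      by (intro divide_left_mono) auto
    then show ?thesis unfolding bound disc B_def .
  qed
qed

section \<open>Hilbert balls of Q centred at the origin\<close>

text \<open>The chord through 0 and p meets the boundary at -p/rho and p/rho, where rho is the
  sup-norm of p; in particular 0 is the midpoint of the chord.\<close>
lemma square_chord_through_origin:
  fixes p a b :: "real \<times> real" and s t :: real
  defines "\<rho> \<equiv> max \<bar>fst p\<bar> \<bar>snd p\<bar>"
  assumes \<rho>: "\<rho> > 0"
    and ab: "a \<in> frontier square_Q" "b \<in> frontier square_Q"
    and st: "0 < s" "s < t" "t < 1"
    and zero: "0 = (1 - s) *\<^sub>R a + s *\<^sub>R b" and pt: "p = (1 - t) *\<^sub>R a + t *\<^sub>R b"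
  shows "s = 1/2" "t = (1 + \<rho>) / 2"
proof -
  have ts: "t - s > 0" using st by simp
  have "p = ((1 - t) *\<^sub>R a + t *\<^sub>R b) - ((1 - s) *\<^sub>R a + s *\<^sub>R b)"
    using zero pt by simp
  also have "\<dots> = (t - s) *\<^sub>R (b - a)" by (simp add: algebra_simps)
  finally have ba: "b - a = (1 / (t - s)) *\<^sub>R p" using ts by simp
  have "0 = a + s *\<^sub>R (b - a)" using zero by (simp add: algebra_simps)
  then have a_eq: "a = (- (s / (t - s))) *\<^sub>R p" using ba by (simp add: eq_neg_iff_add_eq_0)
  have b_eq: "b = ((1 - s) / (t - s)) *\<^sub>R p"
    using a_eq ba ts by (simp add: algebra_simps diff_divide_distrib)
  have A: "s * \<rho> = t - s"
    using ab(1) ts st \<rho> unfolding a_eq frontier_square_Q_iff sup_norm_scaleR \<rho>_def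
    by (simp add: field_simps)
  have B: "(1 - s) * \<rho> = t - s"
    using ab(2) ts st \<rho> unfolding b_eq frontier_square_Q_iff sup_norm_scaleR \<rho>_def
    by (simp add: field_simps)
  from A B have "s * \<rho> = (1 - s) * \<rho>" by simp
  with \<rho> show s: "s = 1/2" by simp
  from A show "t = (1 + \<rho>) / 2" unfolding s by (simp add: field_simps)
qed

lemma hilbert_dist_square_origin:
  fixes p :: "real \<times> real"
  assumes p: "p \<in> square_Q" and p0: "p \<noteq> 0"
  shows "hilbert_dist square_Q 0 p = artanh (max \<bar>fst p\<bar> \<bar>snd p\<bar>)"
proof -
  define \<rho> where "\<rho> = max \<bar>fst p\<bar> \<bar>snd p\<bar>"
  have \<rho>1: "\<rho> < 1" using p by (auto simp: square_Q_iff \<rho>_def)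
  have \<rho>0: "\<rho> > 0" using p0 by (cases p) (auto simp: \<rho>_def zero_prod_def max_def)
  have cross_ratio: "(1/2) * ln (((1 - s) / s) * (t / (1 - t))) = artanh \<rho>"
    if "s = 1/2" "t = (1 + \<rho>) / 2" for s t :: real
  proof -
    have "((1 - s) / s) * (t / (1 - t)) = (1 + \<rho>) / (1 - \<rho>)"
      unfolding that using \<rho>1 by (simp add: field_simps)
    then show ?thesis unfolding artanh_def by simp
  qed
  have "hilbert_dist square_Q 0 p = artanh \<rho>"
    unfolding hilbert_dist_def if_not_P[OF p0[symmetric]]
  proof (rule the_equality)
    show "\<exists>a b s t. a \<in> frontier square_Q \<and> b \<in> frontier square_Q \<and> 0 < s \<and> s < t \<and> t < 1 \<and>
          0 = (1 - s) *\<^sub>R a + s *\<^sub>R b \<and> p = (1 - t) *\<^sub>R a + t *\<^sub>R b \<and>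
          artanh \<rho> = (1/2) * ln (((1 - s) / s) * (t / (1 - t)))"
    proof (intro exI conjI)
      show "- (1/\<rho>) *\<^sub>R p \<in> frontier square_Q" "(1/\<rho>) *\<^sub>R p \<in> frontier square_Q"
        unfolding frontier_square_Q_iff sup_norm_scaleR using \<rho>0 by (simp_all add: \<rho>_def[symmetric])
      show "0 < (1/2::real)" "(1/2::real) < (1 + \<rho>)/2" "(1 + \<rho>)/2 < 1" using \<rho>0 \<rho>1 by auto
      show "0 = (1 - 1/2) *\<^sub>R (- (1/\<rho>) *\<^sub>R p) + (1/2) *\<^sub>R ((1/\<rho>) *\<^sub>R p)" by simp
      show "p = (1 - (1 + \<rho>) / 2) *\<^sub>R (- (1/\<rho>) *\<^sub>R p) + ((1 + \<rho>) / 2) *\<^sub>R ((1/\<rho>) *\<^sub>R p)"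
        using \<rho>0 by (cases p) (simp add: field_simps)
    qed (intro cross_ratio[symmetric]; simp)
  next
    fix d
    assume "\<exists>a b s t. a \<in> frontier square_Q \<and> b \<in> frontier square_Q \<and> 0 < s \<and> s < t \<and> t < 1 \<and>
          0 = (1 - s) *\<^sub>R a + s *\<^sub>R b \<and> p = (1 - t) *\<^sub>R a + t *\<^sub>R b \<and>
          d = (1/2) * ln (((1 - s) / s) * (t / (1 - t)))"
    then obtain a b s t where
        chord: "a \<in> frontier square_Q" "b \<in> frontier square_Q" "0 < s" "s < t" "t < 1"
          "0 = (1 - s) *\<^sub>R a + s *\<^sub>R b" "p = (1 - t) *\<^sub>R a + t *\<^sub>R b"
        and d: "d = (1/2) * ln (((1 - s) / s) * (t / (1 - t)))"
      by blast
    have "s = 1/2" "t = (1 + \<rho>) / 2"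
      using square_chord_through_origin[OF \<rho>0[unfolded \<rho>_def] chord] by (simp_all add: \<rho>_def)
    then show "d = artanh \<rho>" unfolding d by (rule cross_ratio)
  qed
  then show ?thesis by (simp add: \<rho>_def)
qed

lemma tanh_artanh_real:
  fixes x :: real
  assumes "\<bar>x\<bar> < 1"
  shows "tanh (artanh x) = x"
proof -
  have a: "1 - x > 0" "1 + x > 0" using assms by (auto simp: abs_less_iff)
  have "exp (- 2 * artanh x) = exp (- ln ((1 + x) / (1 - x)))" by (simp add: artanh_def)
  also have "\<dots> = (1 - x) / (1 + x)" using a by (simp add: exp_minus)
  finally have e: "exp (- 2 * artanh x) = (1 - x) / (1 + x)" .
  show ?thesis unfolding tanh_real_altdef e using a by (simp add: field_simps)
qed

lemma hilbert_ball_square_subset: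
  assumes R: "R > 0"
  shows "hilbert_ball square_Q 0 R \<subseteq> square_Q \<inter> {-tanh R..tanh R} \<times> {-tanh R..tanh R}"
proof
  fix p :: "real \<times> real"
  assume ball: "p \<in> hilbert_ball square_Q 0 R"
  then have pQ: "p \<in> square_Q" by (simp add: hilbert_ball_def)
  define \<rho> where "\<rho> = max \<bar>fst p\<bar> \<bar>snd p\<bar>"
  have "\<rho> \<le> tanh R"
  proof (cases "p = 0")
    case True
    then show ?thesis using R by (simp add: \<rho>_def less_imp_le)
  next
    case False
    have \<rho>1: "\<bar>\<rho>\<bar> < 1" using pQ by (auto simp: square_Q_iff \<rho>_def)
    have "artanh \<rho> < R"
      using ball hilbert_dist_square_origin[OF pQ False] by (simp add: hilbert_ball_def \<rho>_def)
    then have "tanh (artanh \<rho>) < tanh R" by simp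
    then show ?thesis unfolding tanh_artanh_real[OF \<rho>1] by simp
  qed
  then show "p \<in> square_Q \<inter> {-tanh R..tanh R} \<times> {-tanh R..tanh R}"
    using pQ by (cases p) (auto simp: \<rho>_def)
qed

section \<open>Integration\<close>

text \<open>The one-dimensional weight 1/(1-x^2) on [-r,r]; it is the derivative of artanh.\<close>
definition artanh_weight :: "real \<Rightarrow> real \<Rightarrow> ennreal" where
  "artanh_weight r x = ennreal (1 / (1 - x\<^sup>2)) * indicator {-r..r} x"

lemma artanh_weight_measurable [measurable]: "artanh_weight r \<in> borel_measurable lborel"
  unfolding artanh_weight_def[abs_def] by measurable

lemma artanh_weight_nn_integral:
  fixes r :: real
  assumes r0: "0 \<le> r" and r1: "r < 1"
  shows "(\<integral>\<^sup>+ x. artanh_weight r x \<partial>lborel) = ennreal (2 * artanh r)"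
proof -
  have inside: "\<bar>x\<bar> < 1" if "x \<in> {-r..r}" for x using that r1 by auto
  have "((\<lambda>x. 1 / (1 - x\<^sup>2)) has_integral (artanh r - artanh (-r))) {-r..r}"
  proof (rule fundamental_theorem_of_calculus)
    show "(artanh has_vector_derivative 1 / (1 - x\<^sup>2)) (at x within {-r..r})" if "x \<in> {-r..r}" for x
      unfolding has_real_derivative_iff_has_vector_derivative[symmetric]
      using inside[OF that] by (rule artanh_real_has_field_derivative)
  qed (use r0 in simp)
  then have "((\<lambda>x. 1 / (1 - x\<^sup>2)) has_integral (2 * artanh r)) {-r..r}"
    using r0 r1 by simp
  moreover have "0 \<le> 1 / (1 - x\<^sup>2)" if "x \<in> {-r..r}" for x
    using inside[OF that] by (simp add: abs_square_less_1 less_imp_le)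
  ultimately show ?thesis
    unfolding artanh_weight_def by (intro nn_integral_has_integral_lebesgue') auto
qed

lemma nn_integral_lborel_product:
  fixes f g :: "real \<Rightarrow> ennreal"
  assumes [measurable]: "f \<in> borel_measurable lborel" "g \<in> borel_measurable lborel"
  shows "(\<integral>\<^sup>+ z. f (fst z) * g (snd z) \<partial>lborel) = (\<integral>\<^sup>+ x. f x \<partial>lborel) * (\<integral>\<^sup>+ y. g y \<partial>lborel)"
proof -
  have "(\<integral>\<^sup>+ z. f (fst z) * g (snd z) \<partial>lborel) = (\<integral>\<^sup>+ z. f (fst z) * g (snd z) \<partial>(lborel \<Otimes>\<^sub>M lborel))"
    by (simp only: lborel_prod)
  also have "\<dots> = (\<integral>\<^sup>+ x. \<integral>\<^sup>+ y. (\<lambda>z. f (fst z) * g (snd z)) (x, y) \<partial>lborel \<partial>lborel)"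
    by (rule lborel.nn_integral_fst[symmetric]) measurable
  also have "\<dots> = (\<integral>\<^sup>+ x. f x * (\<integral>\<^sup>+ y. g y \<partial>lborel) \<partial>lborel)"
    by (simp add: nn_integral_cmult)
  finally show ?thesis by (simp add: nn_integral_multc)
qed

lemma hilbert_density_on_ball_le:
  fixes p :: "real \<times> real"
  assumes R: "R > 0"
  shows "ennreal (measure lebesgue (ball (0::real \<times> real) 1) / measure lebesgue (finsler_ball square_Q p))
           * indicator (hilbert_ball square_Q 0 R) p
         \<le> ennreal (pi / 2) * (artanh_weight (tanh R) (fst p) * artanh_weight (tanh R) (snd p))"
proof (cases "p \<in> hilbert_ball square_Q 0 R")
  case True
  obtain x y where p: "p = (x, y)" by (cases p)
  have pQ: "(x, y) \<in> square_Q" and xy: "x \<in> {-tanh R..tanh R}" "y \<in> {-tanh R..tanh R}"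
    using hilbert_ball_square_subset[OF R] True by (auto simp: p)
  define wx where "wx = 1 / (1 - x\<^sup>2)"
  define wy where "wy = 1 / (1 - y\<^sup>2)"
  have "0 \<le> wx" "0 \<le> wy"
    using pQ by (auto simp: wx_def wy_def square_Q_iff abs_square_less_1 less_imp_le)
  then have "ennreal ((pi / 2) * wx * wy)
      = ennreal (pi / 2) * (artanh_weight (tanh R) x * artanh_weight (tanh R) y)"
    using xy by (simp add: artanh_weight_def wx_def[symmetric] wy_def[symmetric] ennreal_mult[symmetric])
  then show ?thesis
    using True ennreal_leI[OF hilbert_density_square_le[OF pQ]] by (simp add: p wx_def wy_def)
qed simp

theorem mainTheorem7:
  fixes R :: real
  assumes "R > 0"
  shows "hilbert_measure square_Q (hilbert_ball square_Q 0 R) \<le> ennreal (2 * pi * R\<^sup>2)"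
proof -
  define G where "G = artanh_weight (tanh R)"
  have "hilbert_measure square_Q (hilbert_ball square_Q 0 R)
      \<le> (\<integral>\<^sup>+ p. ennreal (pi / 2) * (G (fst p) * G (snd p)) \<partial>lebesgue)"
    unfolding hilbert_measure_def G_def
    by (intro nn_integral_mono hilbert_density_on_ball_le[OF assms])
  also have "\<dots> = ennreal (pi / 2) * (\<integral>\<^sup>+ p. G (fst p) * G (snd p) \<partial>lborel)"
    unfolding nn_integral_completion G_def
    by (intro nn_integral_cmult, subst lborel_prod[symmetric]) measurable
  also have "\<dots> = ennreal (pi / 2) * (\<integral>\<^sup>+ x. G x \<partial>lborel) * (\<integral>\<^sup>+ y. G y \<partial>lborel)"
    by (simp add: nn_integral_lborel_product G_def mult.assoc)
  also have "(\<integral>\<^sup>+ x. G x \<partial>lborel) = ennreal (2 * R)"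
    using artanh_weight_nn_integral[of "tanh R"] assms
    by (simp add: G_def tanh_real_lt_1 less_imp_le artanh_tanh_real)
  also have "ennreal (pi / 2) * ennreal (2 * R) * ennreal (2 * R) = ennreal (2 * pi * R\<^sup>2)"
    using assms by (simp add: ennreal_mult'[symmetric] power2_eq_square)
  finally show ?thesis .
qed

end
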